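(* Let $F$ be a $p$-rigid field ($p$ odd, $F$ containing a primitive $p$th root of unity), let $a\in\dot F\setminus\dot F^p$ and $E=F(\sqrt[p]{a})$. Let $\epsilon\colon\dot F/\dot F^p\to\dot E/\dot E^p$ be the homomorphism induced by the inclusion $F\hookrightarrow E$. Then, as $\mathbb F_p$-vector spaces, $$\dot E/\dot E^p=\big\langle[\sqrt[p]{a}]_E\big\rangle\oplus\epsilon\big(\dot F/\dot F^p\big).$$
   Context: For a field $L$, $\dot L=L\setminus\{0\}$, $\dot L^p$ is the group of nonzero $p$th powers and $[x]_L=x\dot L^p$. An element $a\in\dot F\setminus\dot F^p$ is $p$-rigid if every element of $N_{F(\sqrt[p]{a})/F}(F(\sqrt[p]{a})^\times)$ lies in $\bigcup_{k=0}^{p-1}a^k\dot F^p$; $F$ is $p$-rigid if every element of $\dot F\setminus\dot F^p$ is $p$-rigid. *)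

theory Defs
  imports "HOL-Computational_Algebra.Primes" "Jordan_Normal_Form.Determinant"
begin

text \<open>Fields are modelled as subfields of an ambient field of type 'a.\<close>

definition subfield_of :: "'a::field set \<Rightarrow> bool" where
  "subfield_of K \<longleftrightarrow> 0 \<in> K \<and> 1 \<in> K \<and>
     (\<forall>x\<in>K. \<forall>y\<in>K. x + y \<in> K \<and> x * y \<in> K) \<and>
     (\<forall>x\<in>K. - x \<in> K \<and> inverse x \<in> K)"

definition adjoin :: "'a::field set \<Rightarrow> 'a \<Rightarrow> 'a set" where
  "adjoin K \<alpha> = \<Inter> {L. subfield_of L \<and> K \<subseteq> L \<and> \<alpha> \<in> L}"

definition pth_powers :: "'a::field set \<Rightarrow> nat \<Rightarrow> 'a set" where
  "pth_powers L p = (\<lambda>y. y ^ p) ` (L - {0})"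

definition pclass :: "'a::field set \<Rightarrow> nat \<Rightarrow> 'a \<Rightarrow> 'a set" where
  "pclass L p x = (\<lambda>y. x * y ^ p) ` (L - {0})"

definition has_primitive_root_of_unity :: "'a::field set \<Rightarrow> nat \<Rightarrow> bool" where
  "has_primitive_root_of_unity K p \<longleftrightarrow>
     (\<exists>\<zeta>\<in>K. \<zeta> ^ p = 1 \<and> (\<forall>k. 0 < k \<and> k < p \<longrightarrow> \<zeta> ^ k \<noteq> 1))"

text \<open>Matrix of multiplication by x = sum_{i<p} c_i theta^i on K(theta), theta^p = b,
  w.r.t. the K-basis 1, theta, ..., theta^(p-1).  Its determinant is the field norm
  N_{K(theta)/K}(x) (for b not a p-th power, p prime, K(theta) has degree p).\<close>
definition kummer_mult_mat :: "nat \<Rightarrow> 'a::field \<Rightarrow> (nat \<Rightarrow> 'a) \<Rightarrow> 'a mat" where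
  "kummer_mult_mat p b c =
     mat p p (\<lambda>(i, j). if j \<le> i then c (i - j) else b * c (p + i - j))"

text \<open>The norm group N_{K(b^(1/p))/K}(K(b^(1/p))^x): norms of the nonzero elements.\<close>
definition norm_group :: "'a::field set \<Rightarrow> nat \<Rightarrow> 'a \<Rightarrow> 'a set" where
  "norm_group K p b =
     {det (kummer_mult_mat p b c) | c. (\<forall>i<p. c i \<in> K) \<and> (\<exists>i<p. c i \<noteq> 0)}"

definition p_rigid_elt :: "'a::field set \<Rightarrow> nat \<Rightarrow> 'a \<Rightarrow> bool" where
  "p_rigid_elt K p b \<longleftrightarrow> b \<in> K - {0} \<and> b \<notin> pth_powers K p \<and>
     norm_group K p b \<subseteq> (\<Union>k<p. (\<lambda>y. b ^ k * y) ` pth_powers K p)"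

definition p_rigid :: "'a::field set \<Rightarrow> nat \<Rightarrow> bool" where
  "p_rigid K p \<longleftrightarrow> (\<forall>b \<in> K - {0} - pth_powers K p. p_rigid_elt K p b)"

end

theory Submission imports Defs begin

text \<open>Write \<open>E = F(\<alpha>)\<close> with \<open>\<alpha>\<^sup>p = a\<close>, and let \<open>\<sigma>\<close> be the automorphism \<open>\<alpha> \<mapsto> \<zeta>\<alpha>\<close>.
  The norm of \<open>\<Sum> c\<^sub>i \<alpha>\<^sup>i\<close> is the determinant of its multiplication matrix; diagonalising that
  matrix by a Vandermonde matrix in the conjugates \<open>\<zeta>\<^sup>k\<alpha>\<close> shows that the norm is the product
  of the conjugates. Rigidity of \<open>a\<close> makes all norms of nonzero elements nonzero, so \<open>E\<close> is a
  field of degree \<open>p\<close>, and gives \<open>N x = a\<^sup>k y\<^sup>p\<close>. Hence \<open>x / (\<alpha>\<^sup>k y)\<close> has norm 1 and by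
  Hilbert 90 is \<open>\<delta> z = \<sigma> z / z\<close>: every \<open>x\<close> is \<open>\<alpha>\<^sup>k f \<delta> z\<close> with \<open>f \<in> F\<close>. Iterating,
  \<open>x = \<alpha>\<^sup>k f \<delta>\<^sup>p z\<close>, and \<open>\<delta>\<^sup>p z = \<Prod>\<^sub>j (\<sigma>\<^sup>j z)\<^bsup>(-1)\<^sup>p\<^sup>-\<^sup>j(p choose j)\<^esup>\<close> is a \<open>p\<close>-th power.
  Conversely, \<open>\<alpha>\<^sup>k \<in> f E\<^sup>p\<close> gives \<open>a\<^sup>k \<in> F\<^sup>p\<close> after taking norms, so \<open>p\<close> divides \<open>k\<close>.\<close>

lemma subfield_zero: "subfield_of L \<Longrightarrow> 0 \<in> L"
  and subfield_one: "subfield_of L \<Longrightarrow> 1 \<in> L"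
  and subfield_add: "subfield_of L \<Longrightarrow> x \<in> L \<Longrightarrow> y \<in> L \<Longrightarrow> x + y \<in> L"
  and subfield_mult: "subfield_of L \<Longrightarrow> x \<in> L \<Longrightarrow> y \<in> L \<Longrightarrow> x * y \<in> L"
  and subfield_uminus: "subfield_of L \<Longrightarrow> x \<in> L \<Longrightarrow> - x \<in> L"
  and subfield_inverse: "subfield_of L \<Longrightarrow> x \<in> L \<Longrightarrow> inverse x \<in> L"
  by (simp_all add: subfield_of_def)

lemma subfield_diff: "subfield_of L \<Longrightarrow> x \<in> L \<Longrightarrow> y \<in> L \<Longrightarrow> x - y \<in> L"
  by (metis diff_conv_add_uminus subfield_add subfield_uminus)

lemma subfield_divide: "subfield_of L \<Longrightarrow> x \<in> L \<Longrightarrow> y \<in> L \<Longrightarrow> x / y \<in> L"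
  by (metis divide_inverse subfield_inverse subfield_mult)

lemma subfield_power: "subfield_of L \<Longrightarrow> x \<in> L \<Longrightarrow> x ^ n \<in> L"
  by (induction n) (auto intro: subfield_one subfield_mult)

lemma subfield_power_int: "subfield_of L \<Longrightarrow> x \<in> L \<Longrightarrow> power_int x n \<in> L"
  by (cases "n \<ge> 0") (auto simp: power_int_def intro: subfield_power subfield_inverse)

lemma subfield_sum: "subfield_of L \<Longrightarrow> (\<And>i. i \<in> A \<Longrightarrow> f i \<in> L) \<Longrightarrow> sum f A \<in> L"
  by (induction A rule: infinite_finite_induct) (auto intro: subfield_zero subfield_add)

lemma subfield_prod: "subfield_of L \<Longrightarrow> (\<And>i. i \<in> A \<Longrightarrow> f i \<in> L) \<Longrightarrow> prod f A \<in> L"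
  by (induction A rule: infinite_finite_induct) (auto intro: subfield_one subfield_mult)

lemma subfield_det:
  assumes L: "subfield_of L" and A: "A \<in> carrier_mat n n"
    and entries: "\<And>i j. i < n \<Longrightarrow> j < n \<Longrightarrow> A $$ (i, j) \<in> L"
  shows "det A \<in> L"
proof -
  have sign: "(signof q :: 'a) \<in> L" for q
    using L by (auto simp: sign_def intro: subfield_one subfield_uminus)
  show ?thesis unfolding det_def'[OF A]
  proof (intro subfield_sum[OF L] subfield_mult[OF L sign] subfield_prod[OF L])
    fix q i assume q: "q \<in> {q. q permutes {0..<n}}" and i: "i \<in> {0..<n}"
    have "q i \<in> {0..<n}" using q i permutes_in_image by fastforce
    thus "A $$ (i, q i) \<in> L" using i entries by auto
  qed
qed

lemma pclass_mult_power:
  assumes L: "subfield_of L" and v: "v \<in> L" "v \<noteq> 0"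
  shows "pclass L n (x * v ^ n) = pclass L n x"
proof
  show "pclass L n (x * v ^ n) \<subseteq> pclass L n x"
  proof
    fix w assume "w \<in> pclass L n (x * v ^ n)"
    then obtain y where y: "y \<in> L - {0}" "w = x * v ^ n * y ^ n" by (auto simp: pclass_def)
    hence "w = x * (v * y) ^ n" "v * y \<in> L - {0}"
      using v subfield_mult[OF L] by (auto simp: power_mult_distrib mult_ac)
    thus "w \<in> pclass L n x" unfolding pclass_def by blast
  qed
  show "pclass L n x \<subseteq> pclass L n (x * v ^ n)"
  proof
    fix w assume "w \<in> pclass L n x"
    then obtain y where y: "y \<in> L - {0}" "w = x * y ^ n" by (auto simp: pclass_def)
    hence "w = x * v ^ n * (y / v) ^ n" "y / v \<in> L - {0}"
      using v subfield_divide[OF L] by (auto simp: power_divide)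
    thus "w \<in> pclass L n (x * v ^ n)" unfolding pclass_def by blast
  qed
qed

lemma pclass_self: "subfield_of L \<Longrightarrow> x \<in> pclass L n x"
  unfolding pclass_def using subfield_one[of L] by (intro image_eqI[of _ _ 1]) auto

lemma dvd_pred_mult_add_iff:
  fixes i j n :: nat assumes "i < n" "j < n"
  shows "n dvd ((n - 1) * i + j) \<longleftrightarrow> i = j"
proof
  assume "i = j"
  hence "(n - 1) * i + j = n * i" using assms by (simp add: algebra_simps diff_mult_distrib)
  thus "n dvd ((n - 1) * i + j)" by simp
next
  assume d: "n dvd ((n - 1) * i + j)"
  have "(n - 1) * i + i = n * i" using assms by (cases n) auto
  hence "(n - 1) * i + j + i = n * i + j" by simp
  hence "((n - 1) * i + j + i) mod n = j" using assms by (simp only:) simp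
  moreover have "((n - 1) * i + j + i) mod n = i" using d assms
    by (metis mod_add_left_eq mod_less add_0 dvd_imp_mod_0)
  ultimately show "i = j" by simp
qed

lemma sum_lessThan_odd: "(\<Sum>k<Suc (2 * t). k) = (2 * t + 1) * t"
  by (induction t) (auto simp: algebra_simps)

text \<open>The exponent of \<open>\<sigma>\<^sup>j\<close> in \<open>(\<sigma> - 1)\<^sup>n\<close>, written multiplicatively.\<close>
definition alt_binomial :: "nat \<Rightarrow> nat \<Rightarrow> int" where
  "alt_binomial n j = (- 1) ^ (n - j) * int (n choose j)"

lemma alt_binomial_Suc_Suc: "alt_binomial (Suc n) (Suc j) = alt_binomial n j - alt_binomial n (Suc j)"
proof (cases "j < n")
  case True
  hence "n - j = Suc (n - Suc j)" by simp
  thus ?thesis unfolding alt_binomial_def by (simp add: algebra_simps)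
qed (simp add: alt_binomial_def)

lemma prime_dvd_alt_binomial: "prime p \<Longrightarrow> 0 < j \<Longrightarrow> j < p \<Longrightarrow> int p dvd alt_binomial p j"
  unfolding alt_binomial_def by (simp add: dvd_choose_prime)

section \<open>Polynomial expressions in a radical\<close>

definition eval_coeffs :: "nat \<Rightarrow> (nat \<Rightarrow> 'a::field) \<Rightarrow> 'a \<Rightarrow> 'a" where
  "eval_coeffs n c \<beta> = (\<Sum>i<n. c i * \<beta> ^ i)"

text \<open>Coefficients of the product of two such expressions when \<open>\<beta>\<^sup>n = b\<close>.\<close>
definition kummer_mult_coeffs :: "nat \<Rightarrow> 'a::field \<Rightarrow> (nat \<Rightarrow> 'a) \<Rightarrow> (nat \<Rightarrow> 'a) \<Rightarrow> nat \<Rightarrow> 'a" where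
  "kummer_mult_coeffs n b c d i =
     (if i < n then (\<Sum>j<n. kummer_mult_mat n b c $$ (i, j) * d j) else 0)"

lemma eval_coeffs_cong: "(\<And>i. i < n \<Longrightarrow> c i = d i) \<Longrightarrow> eval_coeffs n c \<beta> = eval_coeffs n d \<beta>"
  by (simp add: eval_coeffs_def)

lemma eval_coeffs_add: "eval_coeffs n c \<beta> + eval_coeffs n d \<beta> = eval_coeffs n (\<lambda>i. c i + d i) \<beta>"
  by (simp add: eval_coeffs_def sum.distrib distrib_right)

lemma eval_coeffs_diff: "eval_coeffs n c \<beta> - eval_coeffs n d \<beta> = eval_coeffs n (\<lambda>i. c i - d i) \<beta>"
  by (simp add: eval_coeffs_def sum_subtractf left_diff_distrib)

lemma eval_coeffs_uminus: "- eval_coeffs n c \<beta> = eval_coeffs n (\<lambda>i. - c i) \<beta>"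
  by (simp add: eval_coeffs_def sum_negf)

lemma eval_coeffs_monom:
  assumes "k < n" shows "eval_coeffs n (\<lambda>i. if i = k then f else 0) \<beta> = f * \<beta> ^ k"
proof -
  have "(\<Sum>i<n. (if i = k then f else 0) * \<beta> ^ i) = (\<Sum>i<n. if i = k then f * \<beta> ^ k else 0)"
    by (rule sum.cong) auto
  thus ?thesis using assms by (simp add: eval_coeffs_def)
qed

lemma eval_coeffs_nonzero_imp_coeff_nonzero: "eval_coeffs n c \<beta> \<noteq> 0 \<Longrightarrow> \<exists>i<n. c i \<noteq> 0"
  by (metis (mono_tags) eval_coeffs_def lessThan_iff mult_zero_left sum.neutral)

text \<open>The \<open>j\<close>-th column of the multiplication matrix holds the coefficients of \<open>x \<beta>\<^sup>j\<close>:
  the terms \<open>c\<^sub>m \<beta>\<^sup>m\<^sup>+\<^sup>j\<close> with \<open>m + j \<ge> n\<close> wrap around via \<open>\<beta>\<^sup>n = b\<close>.\<close>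
lemma kummer_mult_mat_carrier: "kummer_mult_mat n b c \<in> carrier_mat n n"
  by (simp add: kummer_mult_mat_def)

lemma kummer_mult_mat_column:
  fixes \<beta> b :: "'a::field"
  assumes \<beta>: "\<beta> ^ n = b" and j: "j < n"
  shows "(\<Sum>i<n. kummer_mult_mat n b c $$ (i, j) * \<beta> ^ i) = eval_coeffs n c \<beta> * \<beta> ^ j"
proof -
  define M where "M = kummer_mult_mat n b c"
  have M: "\<And>i. i < n \<Longrightarrow> M $$ (i, j) = (if j \<le> i then c (i - j) else b * c (n + i - j))"
    using j by (simp add: kummer_mult_mat_def M_def)
  have "(\<Sum>i<n. M $$ (i, j) * \<beta> ^ i)
      = (\<Sum>i\<in>{0..<j}. M $$ (i, j) * \<beta> ^ i) + (\<Sum>i\<in>{j..<n}. M $$ (i, j) * \<beta> ^ i)"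
    using j by (simp add: lessThan_atLeast0 sum.atLeastLessThan_concat)
  also have "(\<Sum>i\<in>{0..<j}. M $$ (i, j) * \<beta> ^ i) = (\<Sum>i\<in>{0..<j}. b * c (n + i - j) * \<beta> ^ i)"
    using j M by (intro sum.cong) auto
  also have "(\<Sum>i\<in>{j..<n}. M $$ (i, j) * \<beta> ^ i) = (\<Sum>i\<in>{j..<n}. c (i - j) * \<beta> ^ i)"
    using j M by (intro sum.cong) auto
  finally have lhs: "(\<Sum>i<n. M $$ (i, j) * \<beta> ^ i)
      = (\<Sum>i\<in>{0..<j}. b * c (n + i - j) * \<beta> ^ i) + (\<Sum>i\<in>{j..<n}. c (i - j) * \<beta> ^ i)" .
  have "eval_coeffs n c \<beta> * \<beta> ^ j = (\<Sum>m<n. c m * \<beta> ^ (m + j))"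
    by (simp add: eval_coeffs_def sum_distrib_right power_add mult.assoc)
  also have "\<dots> = (\<Sum>m\<in>{0..<n-j}. c m * \<beta> ^ (m + j)) + (\<Sum>m\<in>{n-j..<n}. c m * \<beta> ^ (m + j))"
    using j by (simp add: lessThan_atLeast0 sum.atLeastLessThan_concat)
  also have "(\<Sum>m\<in>{0..<n-j}. c m * \<beta> ^ (m + j)) = (\<Sum>i\<in>{j..<n}. c (i - j) * \<beta> ^ i)"
    using sum.shift_bounds_nat_ivl[of "\<lambda>i. c (i - j) * \<beta> ^ i" 0 j "n - j"] j by simp
  also have "(\<Sum>m\<in>{n-j..<n}. c m * \<beta> ^ (m + j)) = (\<Sum>i\<in>{0..<j}. b * c (n + i - j) * \<beta> ^ i)"
  proof -
    have "(\<Sum>m\<in>{n-j..<n}. c m * \<beta> ^ (m + j)) = (\<Sum>i\<in>{0..<j}. c (i + (n - j)) * \<beta> ^ (i + (n - j) + j))"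
      using sum.shift_bounds_nat_ivl[of "\<lambda>m. c m * \<beta> ^ (m + j)" 0 "n - j" j] j by simp
    also have "\<dots> = (\<Sum>i\<in>{0..<j}. b * c (n + i - j) * \<beta> ^ i)"
    proof (intro sum.cong refl)
      fix i assume "i \<in> {0..<j}"
      have "i + (n - j) + j = n + i" "i + (n - j) = n + i - j" using j by auto
      thus "c (i + (n - j)) * \<beta> ^ (i + (n - j) + j) = b * c (n + i - j) * \<beta> ^ i"
        using \<beta> by (simp add: power_add)
    qed
    finally show ?thesis .
  qed
  finally show ?thesis unfolding M_def[symmetric] lhs by (simp add: add.commute)
qed

lemma eval_coeffs_mult:
  fixes \<beta> b :: "'a::field"
  assumes \<beta>: "\<beta> ^ n = b"
  shows "eval_coeffs n c \<beta> * eval_coeffs n d \<beta> = eval_coeffs n (kummer_mult_coeffs n b c d) \<beta>"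
proof -
  have "eval_coeffs n c \<beta> * eval_coeffs n d \<beta> = (\<Sum>j<n. d j * (eval_coeffs n c \<beta> * \<beta> ^ j))"
    by (simp add: eval_coeffs_def sum_distrib_left sum_distrib_right mult_ac)
  also have "\<dots> = (\<Sum>j<n. d j * (\<Sum>i<n. kummer_mult_mat n b c $$ (i, j) * \<beta> ^ i))"
    using kummer_mult_mat_column[OF \<beta>] by simp
  also have "\<dots> = (\<Sum>i<n. \<Sum>j<n. kummer_mult_mat n b c $$ (i, j) * d j * \<beta> ^ i)"
    by (subst sum.swap) (simp add: sum_distrib_left mult_ac)
  also have "\<dots> = eval_coeffs n (kummer_mult_coeffs n b c d) \<beta>"
    by (simp add: eval_coeffs_def kummer_mult_coeffs_def sum_distrib_right)
  finally show ?thesis .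
qed

section \<open>Conjugates of a radical\<close>

locale kummer_radical =
  fixes F :: "'a::field set" and p :: nat and a \<alpha> \<zeta> :: 'a
  assumes subfield: "subfield_of F" and prime: "prime p" and odd: "odd p"
    and zeta_in_F: "\<zeta> \<in> F" and zeta_power_p: "\<zeta> ^ p = 1"
    and zeta_primitive: "\<And>k. 0 < k \<Longrightarrow> k < p \<Longrightarrow> \<zeta> ^ k \<noteq> 1"
    and a_in_F: "a \<in> F" and a_nonzero: "a \<noteq> 0" and alpha_power_p: "\<alpha> ^ p = a"
begin

abbreviation mult_mat :: "(nat \<Rightarrow> 'a) \<Rightarrow> 'a mat" where
  "mult_mat c \<equiv> kummer_mult_mat p a c"

lemma p_ge_2: "p \<ge> 2"
  using prime prime_ge_2_nat by blast

lemma zeta_nonzero: "\<zeta> \<noteq> 0"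
  using zeta_power_p p_ge_2 by (metis power_0_left zero_neq_one not_numeral_le_zero le_0_eq)

lemma alpha_nonzero: "\<alpha> \<noteq> 0"
  using alpha_power_p a_nonzero p_ge_2 by auto

lemma zeta_power_mod: "\<zeta> ^ (m mod p) = \<zeta> ^ m"
proof -
  have "\<zeta> ^ m = \<zeta> ^ (p * (m div p) + m mod p)" by simp
  also have "\<dots> = \<zeta> ^ (m mod p)" unfolding power_add power_mult zeta_power_p by simp
  finally show ?thesis ..
qed

lemma zeta_power_eq_1_iff: "\<zeta> ^ m = 1 \<longleftrightarrow> p dvd m"
proof
  assume "\<zeta> ^ m = 1"
  hence "\<zeta> ^ (m mod p) = 1" using zeta_power_mod by simp
  moreover have "m mod p < p" using p_ge_2 by simp
  ultimately have "m mod p = 0" using zeta_primitive by (metis bot_nat_0.not_eq_extremum)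
  thus "p dvd m" by presburger
next
  assume "p dvd m"
  thus "\<zeta> ^ m = 1" by (auto simp: power_mult zeta_power_p)
qed

lemma sum_powers_zeta_power: "(\<Sum>j<p. (\<zeta> ^ m) ^ j) = (if p dvd m then of_nat p else 0)"
proof (cases "p dvd m")
  case True
  hence "\<zeta> ^ m = 1" using zeta_power_eq_1_iff by simp
  thus ?thesis using True by simp
next
  case False
  hence "\<zeta> ^ m \<noteq> 1" using zeta_power_eq_1_iff by simp
  moreover have "(\<zeta> ^ m) ^ p = 1" by (metis power_mult mult.commute zeta_power_p power_one)
  ultimately show ?thesis using False by (simp add: geometric_sum)
qed

text \<open>In characteristic \<open>p\<close> we would have \<open>(\<zeta> - 1)\<^sup>p = \<zeta>\<^sup>p - 1 = 0\<close>, contradicting \<open>\<zeta> \<noteq> 1\<close>.\<close>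
lemma of_nat_p_nonzero: "(of_nat p :: 'a) \<noteq> 0"
proof
  assume p0: "(of_nat p :: 'a) = 0"
  have "(\<zeta> - 1) ^ p = (\<Sum>k\<le>p. of_nat (p choose k) * \<zeta> ^ k * (- 1) ^ (p - k))"
    unfolding diff_conv_add_uminus by (rule binomial_ring)
  also have "\<dots> = (\<Sum>k\<in>{0,p}. of_nat (p choose k) * \<zeta> ^ k * (- 1) ^ (p - k))"
  proof (rule sum.mono_neutral_right)
    show "\<forall>i\<in>{..p} - {0, p}. of_nat (p choose i) * \<zeta> ^ i * (- 1) ^ (p - i) = (0::'a)"
    proof
      fix i assume i: "i \<in> {..p} - {0, p}"
      have "p dvd (p choose i)" using i prime by (intro dvd_choose_prime) auto
      then obtain t where "p choose i = p * t" by auto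
      thus "of_nat (p choose i) * \<zeta> ^ i * (- 1) ^ (p - i) = (0::'a)" using p0 by simp
    qed
  qed auto
  also have "\<dots> = (- 1) ^ p + \<zeta> ^ p"
    using p_ge_2 by (simp add: sum.insert)
  finally have "(\<zeta> - 1) ^ p = 0" using odd zeta_power_p by simp
  hence "\<zeta> = 1" by simp
  thus False using zeta_primitive[of 1] p_ge_2 by simp
qed

lemma conj_power_p: "(\<zeta> ^ k * \<alpha>) ^ p = a"
  by (simp add: power_mult_distrib alpha_power_p flip: power_mult)
     (simp add: mult.commute[of k] power_mult zeta_power_p)

lemma eval_coeffs_conj: "eval_coeffs p c (\<zeta> ^ k * \<alpha>) = eval_coeffs p (\<lambda>i. c i * \<zeta> ^ (k * i)) \<alpha>"
proof -
  have "(\<zeta> ^ k * \<alpha>) ^ i = \<zeta> ^ (k * i) * \<alpha> ^ i" for i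
    by (simp add: power_mult_distrib power_mult)
  thus ?thesis unfolding eval_coeffs_def by (simp add: mult_ac)
qed

definition conj_vandermonde :: "'a mat" where
  "conj_vandermonde = mat p p (\<lambda>(k, i). (\<zeta> ^ k * \<alpha>) ^ i)"

text \<open>Since \<open>\<zeta>\<^sup>p\<^sup>-\<^sup>1 = \<zeta>\<^sup>-\<^sup>1\<close>, the orthogonality \<open>\<Sum>\<^sub>k \<zeta>\<^sup>m\<^sup>k = p [p | m]\<close> makes this the inverse.\<close>
definition conj_vandermonde_inv :: "'a mat" where
  "conj_vandermonde_inv =
     mat p p (\<lambda>(i, k). inverse (of_nat p) * inverse \<alpha> ^ i * (\<zeta> ^ ((p - 1) * i)) ^ k)"

definition conj_diag :: "(nat \<Rightarrow> 'a) \<Rightarrow> 'a mat" where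
  "conj_diag c = mat p p (\<lambda>(k, l). if k = l then eval_coeffs p c (\<zeta> ^ k * \<alpha>) else 0)"

lemma conj_vandermonde_inv_mult: "conj_vandermonde_inv * conj_vandermonde = 1\<^sub>m p"
proof (rule eq_matI)
  fix i j assume "i < dim_row (1\<^sub>m p)" and "j < dim_col (1\<^sub>m p)"
  hence i: "i < p" and j: "j < p" by auto
  have "(conj_vandermonde_inv * conj_vandermonde) $$ (i, j)
      = (\<Sum>k<p. inverse (of_nat p) * inverse \<alpha> ^ i * \<alpha> ^ j * (\<zeta> ^ ((p - 1) * i + j)) ^ k)"
    using i j
    by (auto simp: conj_vandermonde_inv_def conj_vandermonde_def scalar_prod_def lessThan_atLeast0
        power_mult_distrib power_add mult_ac intro!: sum.cong simp flip: power_mult)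
  also have "\<dots> = inverse (of_nat p) * inverse \<alpha> ^ i * \<alpha> ^ j * (\<Sum>k<p. (\<zeta> ^ ((p - 1) * i + j)) ^ k)"
    by (simp add: sum_distrib_left)
  also have "\<dots> = 1\<^sub>m p $$ (i, j)"
    using sum_powers_zeta_power[of "(p - 1) * i + j"] dvd_pred_mult_add_iff[OF i j]
      of_nat_p_nonzero alpha_nonzero i j
    by (auto simp: power_inverse field_simps)
  finally show "(conj_vandermonde_inv * conj_vandermonde) $$ (i, j) = 1\<^sub>m p $$ (i, j)" .
qed (auto simp: conj_vandermonde_inv_def conj_vandermonde_def)

lemma det_conj_vandermonde_nonzero: "det conj_vandermonde \<noteq> 0"
proof -
  have "det conj_vandermonde_inv * det conj_vandermonde = 1"
    using det_mult[of conj_vandermonde_inv p conj_vandermonde] conj_vandermonde_inv_mult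
    by (simp add: conj_vandermonde_inv_def conj_vandermonde_def)
  thus ?thesis by auto
qed

lemma conj_vandermonde_mult_mat: "conj_vandermonde * mult_mat c = conj_diag c * conj_vandermonde"
proof (rule eq_matI)
  fix k j assume "k < dim_row (conj_diag c * conj_vandermonde)" "j < dim_col (conj_diag c * conj_vandermonde)"
  hence k: "k < p" and j: "j < p" by (auto simp: conj_diag_def conj_vandermonde_def)
  have "(conj_vandermonde * mult_mat c) $$ (k, j) = (\<Sum>i<p. mult_mat c $$ (i, j) * (\<zeta> ^ k * \<alpha>) ^ i)"
    using k j by (auto simp: conj_vandermonde_def kummer_mult_mat_def scalar_prod_def
        lessThan_atLeast0 mult.commute intro!: sum.cong)
  also have "\<dots> = eval_coeffs p c (\<zeta> ^ k * \<alpha>) * (\<zeta> ^ k * \<alpha>) ^ j"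
    by (rule kummer_mult_mat_column[OF conj_power_p j])
  also have "\<dots> = (\<Sum>l = 0..<p. if l = k then eval_coeffs p c (\<zeta> ^ k * \<alpha>) * (\<zeta> ^ k * \<alpha>) ^ j else 0)"
    using k by simp
  also have "\<dots> = (\<Sum>l = 0..<p. conj_diag c $$ (k, l) * conj_vandermonde $$ (l, j))"
    using k j by (intro sum.cong) (auto simp: conj_diag_def conj_vandermonde_def)
  also have "\<dots> = (conj_diag c * conj_vandermonde) $$ (k, j)"
    using k j by (simp add: conj_diag_def conj_vandermonde_def scalar_prod_def)
  finally show "(conj_vandermonde * mult_mat c) $$ (k, j) = (conj_diag c * conj_vandermonde) $$ (k, j)" .
qed (auto simp: conj_diag_def conj_vandermonde_def kummer_mult_mat_def)

lemma det_mult_mat: "det (mult_mat c) = (\<Prod>k<p. eval_coeffs p c (\<zeta> ^ k * \<alpha>))"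
proof -
  have carrier: "conj_vandermonde \<in> carrier_mat p p" "mult_mat c \<in> carrier_mat p p"
      "conj_diag c \<in> carrier_mat p p"
    by (auto simp: conj_vandermonde_def conj_diag_def kummer_mult_mat_def)
  have "det conj_vandermonde * det (mult_mat c) = det (conj_vandermonde * mult_mat c)"
    using det_mult[OF carrier(1,2)] by simp
  also have "\<dots> = det conj_vandermonde * det (conj_diag c)"
    using conj_vandermonde_mult_mat[of c] det_mult[OF carrier(3,1)] by simp
  finally have "det (mult_mat c) = det (conj_diag c)" using det_conj_vandermonde_nonzero by simp
  also have "\<dots> = prod_list (diag_mat (conj_diag c))"
    by (rule det_upper_triangular[OF _ carrier(3)]) (auto simp: upper_triangular_def conj_diag_def)
  also have "diag_mat (conj_diag c) = map (\<lambda>k. eval_coeffs p c (\<zeta> ^ k * \<alpha>)) [0..<p]"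
    by (auto simp: diag_mat_def conj_diag_def)
  finally show ?thesis by (simp add: prod.distinct_set_conv_list[symmetric] lessThan_atLeast0)
qed

lemma mult_mat_in_F:
  assumes "\<forall>i<p. c i \<in> F" "i < p" "j < p" shows "mult_mat c $$ (i, j) \<in> F"
proof (cases "j \<le> i")
  case False
  hence "c (p + i - j) \<in> F" using assms by simp
  thus ?thesis using assms False a_in_F by (simp add: kummer_mult_mat_def subfield_mult[OF subfield])
qed (use assms in \<open>simp add: kummer_mult_mat_def\<close>)

lemma det_mult_mat_in_F: "\<forall>i<p. c i \<in> F \<Longrightarrow> det (mult_mat c) \<in> F"
  by (rule subfield_det[OF subfield, of _ p]) (auto simp only: mult_mat_in_F kummer_mult_mat_carrier)

lemma kummer_mult_coeffs_in_F:
  "\<forall>i<p. c i \<in> F \<Longrightarrow> \<forall>i<p. d i \<in> F \<Longrightarrow> \<forall>i<p. kummer_mult_coeffs p a c d i \<in> F"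
  by (auto simp: kummer_mult_coeffs_def intro!: subfield_sum[OF subfield] subfield_mult[OF subfield]
      mult_mat_in_F)

text \<open>Orthogonality: summing over \<open>j\<close> leaves \<open>p \<cdot> s 0\<close>.\<close>
lemma exists_zeta_power_sum_nonzero:
  assumes "s 0 = 1" shows "\<exists>j<p. (\<Sum>i<p. s i * (\<zeta> ^ j) ^ i) \<noteq> 0"
proof (rule ccontr)
  assume "\<not> ?thesis"
  hence "(\<Sum>j<p. \<Sum>i<p. s i * (\<zeta> ^ j) ^ i) = 0" by simp
  moreover have "(\<Sum>j<p. \<Sum>i<p. s i * (\<zeta> ^ j) ^ i) = (\<Sum>i<p. s i * (\<Sum>j<p. (\<zeta> ^ i) ^ j))"
    by (subst sum.swap) (simp add: sum_distrib_left mult.commute flip: power_mult)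
  moreover have "\<dots> = (\<Sum>i<p. if i = 0 then of_nat p else 0)"
  proof (rule sum.cong)
    fix i assume "i \<in> {..<p}"
    hence "p dvd i \<longleftrightarrow> i = 0" by (auto dest: dvd_imp_le)
    thus "s i * (\<Sum>j<p. (\<zeta> ^ i) ^ j) = (if i = 0 then of_nat p else 0)"
      using assms by (simp add: sum_powers_zeta_power)
  qed simp
  ultimately show False using of_nat_p_nonzero p_ge_2 by simp
qed

end

section \<open>The radical extension of a rigid element\<close>

locale rigid_kummer_radical = kummer_radical +
  assumes a_rigid: "p_rigid_elt F p a"
begin

lemma a_not_pth_power: "a \<notin> pth_powers F p"
  using a_rigid by (simp add: p_rigid_elt_def)

lemma det_mult_mat_rigid:
  assumes "\<forall>i<p. c i \<in> F" and "\<exists>i<p. c i \<noteq> 0"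
  shows "\<exists>k<p. \<exists>y \<in> F - {0}. det (mult_mat c) = a ^ k * y ^ p"
proof -
  have "det (mult_mat c) \<in> norm_group F p a" using assms by (auto simp: norm_group_def)
  with a_rigid obtain k w where "k < p" "w \<in> pth_powers F p" "det (mult_mat c) = a ^ k * w"
    by (auto simp: p_rigid_elt_def)
  thus ?thesis by (auto simp: pth_powers_def)
qed

lemma det_mult_mat_nonzero: "\<forall>i<p. c i \<in> F \<Longrightarrow> \<exists>i<p. c i \<noteq> 0 \<Longrightarrow> det (mult_mat c) \<noteq> 0"
  using det_mult_mat_rigid[of c] a_nonzero by fastforce

lemma eval_coeffs_conj_nonzero:
  assumes "\<forall>i<p. c i \<in> F" "\<exists>i<p. c i \<noteq> 0"
  shows "eval_coeffs p c (\<zeta> ^ k * \<alpha>) \<noteq> 0"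
proof -
  have "k mod p \<in> {..<p}" using p_ge_2 by simp
  hence "eval_coeffs p c (\<zeta> ^ (k mod p) * \<alpha>) \<noteq> 0"
    using det_mult_mat_nonzero[OF assms] by (auto simp: det_mult_mat)
  thus ?thesis by (simp add: zeta_power_mod)
qed

lemma eval_coeffs_alpha_inj:
  assumes "\<forall>i<p. c i \<in> F" "\<forall>i<p. d i \<in> F" "eval_coeffs p c \<alpha> = eval_coeffs p d \<alpha>" "i < p"
  shows "c i = d i"
proof (rule ccontr)
  assume "c i \<noteq> d i"
  hence "\<exists>i<p. c i - d i \<noteq> 0" using assms(4) by auto
  moreover have "\<forall>i<p. c i - d i \<in> F" using assms(1,2) subfield_diff[OF subfield] by auto
  ultimately have "eval_coeffs p (\<lambda>i. c i - d i) (\<zeta> ^ 0 * \<alpha>) \<noteq> 0"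
    by (intro eval_coeffs_conj_nonzero) auto
  thus False using assms(3) by (simp flip: eval_coeffs_diff)
qed

definition E :: "'a set" where
  "E = {eval_coeffs p c \<alpha> | c. \<forall>i<p. c i \<in> F}"

lemma E_cases:
  assumes "x \<in> E" obtains c where "\<forall>i<p. c i \<in> F" "x = eval_coeffs p c \<alpha>"
  using assms by (auto simp: E_def)

lemma eval_coeffs_in_E: "\<forall>i<p. c i \<in> F \<Longrightarrow> eval_coeffs p c \<alpha> \<in> E"
  by (auto simp: E_def)

lemma F_subset_E: "F \<subseteq> E"
proof
  fix f assume "f \<in> F"
  hence "eval_coeffs p (\<lambda>i. if i = 0 then f else 0) \<alpha> \<in> E"
    using subfield_zero[OF subfield] by (intro eval_coeffs_in_E) auto
  moreover have "eval_coeffs p (\<lambda>i. if i = 0 then f else 0) \<alpha> = f"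
    using p_ge_2 by (simp add: eval_coeffs_monom)
  ultimately show "f \<in> E" by simp
qed

lemma alpha_in_E: "\<alpha> \<in> E"
proof -
  have "eval_coeffs p (\<lambda>i. if i = 1 then 1 else 0) \<alpha> \<in> E"
    using subfield_zero[OF subfield] subfield_one[OF subfield] by (intro eval_coeffs_in_E) auto
  moreover have "eval_coeffs p (\<lambda>i. if i = 1 then 1 else 0) \<alpha> = \<alpha>"
    using p_ge_2 by (simp add: eval_coeffs_monom)
  ultimately show ?thesis by simp
qed

lemma E_add: "x \<in> E \<Longrightarrow> y \<in> E \<Longrightarrow> x + y \<in> E"
  by (elim E_cases) (auto simp: eval_coeffs_add intro!: eval_coeffs_in_E subfield_add[OF subfield])

lemma E_uminus: "x \<in> E \<Longrightarrow> - x \<in> E"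
  by (elim E_cases) (auto simp: eval_coeffs_uminus intro!: eval_coeffs_in_E subfield_uminus[OF subfield])

lemma E_mult: "x \<in> E \<Longrightarrow> y \<in> E \<Longrightarrow> x * y \<in> E"
  by (elim E_cases)
     (simp add: eval_coeffs_mult[OF alpha_power_p] eval_coeffs_in_E kummer_mult_coeffs_in_F)

lemma conj_in_E: "\<forall>i<p. c i \<in> F \<Longrightarrow> eval_coeffs p c (\<zeta> ^ k * \<alpha>) \<in> E"
  unfolding eval_coeffs_conj
  by (intro eval_coeffs_in_E) (auto intro: subfield_mult[OF subfield] subfield_power[OF subfield] zeta_in_F)

lemma E_prod: "(\<And>i. i \<in> A \<Longrightarrow> f i \<in> E) \<Longrightarrow> prod f A \<in> E"
  by (induction A rule: infinite_finite_induct)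
     (auto intro: F_subset_E[THEN subsetD] subfield_one[OF subfield] E_mult)

text \<open>The inverse of \<open>x\<close> is the product of its other conjugates divided by its norm.\<close>
lemma E_inverse:
  assumes "x \<in> E" shows "inverse x \<in> E"
proof (cases "x = 0")
  case True
  thus ?thesis using F_subset_E subfield_zero[OF subfield] by auto
next
  case False
  obtain c where c: "\<forall>i<p. c i \<in> F" and x: "x = eval_coeffs p c \<alpha>" using assms by (rule E_cases)
  have c_nonzero: "\<exists>i<p. c i \<noteq> 0" using False x eval_coeffs_nonzero_imp_coeff_nonzero by simp
  define y where "y = (\<Prod>k\<in>{1..<p}. eval_coeffs p c (\<zeta> ^ k * \<alpha>))"
  have "{..<p} = insert 0 {1..<p}" using p_ge_2 by auto
  hence "det (mult_mat c) = x * y" unfolding det_mult_mat y_def x by simp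
  hence "inverse x = y * inverse (det (mult_mat c))"
    using det_mult_mat_nonzero[OF c c_nonzero] False by (simp add: field_simps)
  moreover have "y \<in> E" unfolding y_def using c by (auto intro!: E_prod conj_in_E)
  moreover have "inverse (det (mult_mat c)) \<in> E"
    using F_subset_E subfield_inverse[OF subfield det_mult_mat_in_F[OF c]] by auto
  ultimately show ?thesis using E_mult by simp
qed

lemma subfield_E: "subfield_of E"
  using F_subset_E subfield_zero[OF subfield] subfield_one[OF subfield]
  by (auto simp: subfield_of_def E_add E_mult E_uminus E_inverse)

lemma adjoin_eq_E: "adjoin F \<alpha> = E"
proof
  show "adjoin F \<alpha> \<subseteq> E" unfolding adjoin_def
    using subfield_E F_subset_E alpha_in_E by (intro Inter_lower) auto
  show "E \<subseteq> adjoin F \<alpha>"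
  proof
    fix x assume "x \<in> E"
    then obtain c where c: "\<forall>i<p. c i \<in> F" and x: "x = eval_coeffs p c \<alpha>" by (rule E_cases)
    show "x \<in> adjoin F \<alpha>" unfolding adjoin_def
    proof (intro InterI, clarify)
      fix L assume L: "subfield_of L" "F \<subseteq> L" "\<alpha> \<in> L"
      show "x \<in> L" unfolding x eval_coeffs_def using c L
        by (auto intro!: subfield_sum subfield_mult subfield_power)
    qed
  qed
qed

section \<open>The automorphism \<open>\<sigma>\<close> and the norm\<close>

definition coeffs :: "'a \<Rightarrow> nat \<Rightarrow> 'a" where
  "coeffs x = (SOME c. (\<forall>i<p. c i \<in> F) \<and> x = eval_coeffs p c \<alpha>)"

lemma coeffs_in_F: "x \<in> E \<Longrightarrow> \<forall>i<p. coeffs x i \<in> F"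
  and eval_coeffs_coeffs: "x \<in> E \<Longrightarrow> eval_coeffs p (coeffs x) \<alpha> = x"
proof -
  assume "x \<in> E"
  hence "\<exists>c. (\<forall>i<p. c i \<in> F) \<and> x = eval_coeffs p c \<alpha>" by (auto simp: E_def)
  from someI_ex[OF this] show "\<forall>i<p. coeffs x i \<in> F" "eval_coeffs p (coeffs x) \<alpha> = x"
    unfolding coeffs_def by simp_all
qed

lemma coeffs_eval_coeffs: "\<forall>i<p. c i \<in> F \<Longrightarrow> i < p \<Longrightarrow> coeffs (eval_coeffs p c \<alpha>) i = c i"
  by (rule eval_coeffs_alpha_inj) (auto simp: coeffs_in_F eval_coeffs_coeffs eval_coeffs_in_E)

definition \<sigma> :: "nat \<Rightarrow> 'a \<Rightarrow> 'a" where
  "\<sigma> k x = eval_coeffs p (coeffs x) (\<zeta> ^ k * \<alpha>)"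

lemma sigma_eval_coeffs: "\<forall>i<p. c i \<in> F \<Longrightarrow> \<sigma> k (eval_coeffs p c \<alpha>) = eval_coeffs p c (\<zeta> ^ k * \<alpha>)"
  unfolding \<sigma>_def by (rule eval_coeffs_cong) (simp add: coeffs_eval_coeffs)

lemma sigma_in_E: "x \<in> E \<Longrightarrow> \<sigma> k x \<in> E"
  unfolding \<sigma>_def by (intro conj_in_E coeffs_in_F)

lemma sigma_nonzero: "x \<in> E \<Longrightarrow> x \<noteq> 0 \<Longrightarrow> \<sigma> k x \<noteq> 0"
  unfolding \<sigma>_def
  by (metis coeffs_in_F eval_coeffs_coeffs eval_coeffs_conj_nonzero eval_coeffs_nonzero_imp_coeff_nonzero)

lemma sigma_add: "x \<in> E \<Longrightarrow> y \<in> E \<Longrightarrow> \<sigma> k (x + y) = \<sigma> k x + \<sigma> k y"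
  by (elim E_cases)
     (simp add: eval_coeffs_add sigma_eval_coeffs subfield_add[OF subfield])

lemma sigma_mult: "x \<in> E \<Longrightarrow> y \<in> E \<Longrightarrow> \<sigma> k (x * y) = \<sigma> k x * \<sigma> k y"
  by (elim E_cases)
     (simp add: eval_coeffs_mult[OF alpha_power_p] eval_coeffs_mult[OF conj_power_p]
       sigma_eval_coeffs kummer_mult_coeffs_in_F)

lemma sigma_F: "f \<in> F \<Longrightarrow> \<sigma> k f = f"
proof -
  assume f: "f \<in> F"
  have c: "\<forall>i<p. (if i = 0 then f else 0) \<in> F" using subfield_zero[OF subfield] f by simp
  have "eval_coeffs p (\<lambda>i. if i = 0 then f else 0) \<beta> = f" for \<beta>
    using p_ge_2 by (simp add: eval_coeffs_monom)
  thus ?thesis using sigma_eval_coeffs[OF c, of k] by simp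
qed

lemma sigma_alpha: "\<sigma> k \<alpha> = \<zeta> ^ k * \<alpha>"
proof -
  have c: "\<forall>i<p. (if i = 1 then 1 else 0) \<in> F"
    using subfield_zero[OF subfield] subfield_one[OF subfield] by simp
  have "eval_coeffs p (\<lambda>i. if i = 1 then 1 else 0) \<beta> = \<beta>" for \<beta>
    using p_ge_2 by (simp add: eval_coeffs_monom)
  thus ?thesis using sigma_eval_coeffs[OF c, of k] by metis
qed

lemma sigma_sigma: "x \<in> E \<Longrightarrow> \<sigma> j (\<sigma> k x) = \<sigma> (k + j) x"
proof (elim E_cases)
  fix c assume c: "\<forall>i<p. c i \<in> F" and x: "x = eval_coeffs p c \<alpha>"
  have c': "\<forall>i<p. c i * \<zeta> ^ (k * i) \<in> F"
    using c zeta_in_F by (auto intro: subfield_mult[OF subfield] subfield_power[OF subfield])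
  have "\<sigma> j (\<sigma> k x) = eval_coeffs p (\<lambda>i. c i * \<zeta> ^ (k * i) * \<zeta> ^ (j * i)) \<alpha>"
    by (simp add: x c c' sigma_eval_coeffs eval_coeffs_conj)
  also have "\<dots> = eval_coeffs p (\<lambda>i. c i * \<zeta> ^ ((k + j) * i)) \<alpha>"
    by (simp add: add_mult_distrib power_add mult.assoc)
  also have "\<dots> = \<sigma> (k + j) x"
    by (simp add: x c sigma_eval_coeffs eval_coeffs_conj)
  finally show ?thesis .
qed

lemma sigma_0: "x \<in> E \<Longrightarrow> \<sigma> 0 x = x"
  and sigma_p: "x \<in> E \<Longrightarrow> \<sigma> p x = x"
  by (simp_all add: \<sigma>_def zeta_power_p eval_coeffs_coeffs)

lemma sigma_zero: "\<sigma> k 0 = 0" and sigma_one: "\<sigma> k 1 = 1"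
  by (simp_all add: sigma_F subfield_zero[OF subfield] subfield_one[OF subfield])

lemma sigma_inverse: "x \<in> E \<Longrightarrow> x \<noteq> 0 \<Longrightarrow> \<sigma> k (inverse x) = inverse (\<sigma> k x)"
  using sigma_mult[of x "inverse x" k] E_inverse[of x] by (simp add: sigma_one inverse_unique)

lemma sigma_power: "x \<in> E \<Longrightarrow> \<sigma> k (x ^ n) = \<sigma> k x ^ n"
  by (induction n) (simp_all add: sigma_one sigma_mult subfield_power[OF subfield_E])

lemma sigma_power_int: "x \<in> E \<Longrightarrow> x \<noteq> 0 \<Longrightarrow> \<sigma> k (power_int x n) = power_int (\<sigma> k x) n"
  by (cases "n \<ge> 0")
     (auto simp: power_int_def sigma_power sigma_inverse E_inverse subfield_power[OF subfield_E])

lemma sigma_prod: "(\<And>i. i \<in> A \<Longrightarrow> f i \<in> E) \<Longrightarrow> \<sigma> k (prod f A) = (\<Prod>i\<in>A. \<sigma> k (f i))"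
  by (induction A rule: infinite_finite_induct)
     (simp_all add: sigma_one sigma_mult subfield_prod[OF subfield_E])

lemma sigma_sum: "(\<And>i. i \<in> A \<Longrightarrow> f i \<in> E) \<Longrightarrow> \<sigma> k (sum f A) = (\<Sum>i\<in>A. \<sigma> k (f i))"
  by (induction A rule: infinite_finite_induct)
     (simp_all add: sigma_zero sigma_add subfield_sum[OF subfield_E])

definition N :: "'a \<Rightarrow> 'a" where
  "N x = (\<Prod>k<p. \<sigma> k x)"

lemma N_eq_det: "N x = det (mult_mat (coeffs x))"
  unfolding N_def det_mult_mat \<sigma>_def ..

lemma N_in_F: "x \<in> E \<Longrightarrow> N x \<in> F"
  unfolding N_eq_det by (intro det_mult_mat_in_F coeffs_in_F)

lemma N_rigid: "x \<in> E \<Longrightarrow> x \<noteq> 0 \<Longrightarrow> \<exists>k<p. \<exists>y\<in>F - {0}. N x = a ^ k * y ^ p"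
  unfolding N_eq_det
  by (metis det_mult_mat_rigid coeffs_in_F eval_coeffs_coeffs eval_coeffs_nonzero_imp_coeff_nonzero)

lemma N_nonzero: "x \<in> E \<Longrightarrow> x \<noteq> 0 \<Longrightarrow> N x \<noteq> 0"
  unfolding N_def using sigma_nonzero by simp

lemma N_mult: "x \<in> E \<Longrightarrow> y \<in> E \<Longrightarrow> N (x * y) = N x * N y"
  unfolding N_def by (simp add: sigma_mult prod.distrib)

lemma N_power: "x \<in> E \<Longrightarrow> N (x ^ n) = N x ^ n"
  unfolding N_def by (simp add: sigma_power prod_power_distrib)

lemma N_F: "f \<in> F \<Longrightarrow> N f = f ^ p"
  unfolding N_def by (simp add: sigma_F)

text \<open>Here \<open>p\<close> odd is used: \<open>\<Prod>\<^sub>k \<zeta>\<^sup>k = \<zeta>\<^sup>p\<^sup>(\<^sup>p\<^sup>-\<^sup>1\<^sup>)\<^sup>/\<^sup>2 = 1\<close>.\<close>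
lemma N_alpha: "N \<alpha> = a"
proof -
  from odd obtain t where t: "p = Suc (2 * t)" by (metis oddE Suc_eq_plus1)
  have "N \<alpha> = (\<Prod>k<p. \<zeta> ^ k) * \<alpha> ^ p" unfolding N_def sigma_alpha by (simp add: prod.distrib)
  also have "(\<Prod>k<p. \<zeta> ^ k) = \<zeta> ^ (\<Sum>k<p. k)" by (simp add: power_sum)
  also have "(\<Sum>k<p. k) = p * t" using t sum_lessThan_odd[of t] by simp
  also have "\<zeta> ^ (p * t) = 1" by (simp add: power_mult zeta_power_p)
  finally show ?thesis using alpha_power_p by simp
qed

lemma hilbert90:
  assumes x: "x \<in> E" "x \<noteq> 0" and N: "N x = 1"
  shows "\<exists>z\<in>E. z \<noteq> 0 \<and> x = \<sigma> 1 z / z"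
proof -
  define s where "s i = (\<Prod>j<i. \<sigma> j x)" for i
  define b where "b c = (\<Sum>i<p. s i * \<sigma> i c)" for c
  have s_in_E: "s i \<in> E" for i unfolding s_def using sigma_in_E x by (auto intro: E_prod)
  have s_0: "s 0 = 1" and s_p: "s p = 1" using N by (simp_all add: s_def N_def)
  have s_Suc: "x * \<sigma> 1 (s i) = s (Suc i)" for i
  proof -
    have "x * \<sigma> 1 (s i) = \<sigma> 0 x * (\<Prod>j<i. \<sigma> (Suc j) x)"
      unfolding s_def using x sigma_in_E by (simp add: sigma_prod sigma_sigma sigma_0)
    also have "\<dots> = s (Suc i)" unfolding s_def by (rule prod.lessThan_Suc_shift[symmetric])
    finally show ?thesis .
  qed
  text \<open>Multiplication by \<open>x\<close> and \<open>\<sigma>\<close> shift the sum \<open>b c\<close> cyclically, as \<open>s p = s 0\<close>.\<close>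
  have b_fixed: "x * \<sigma> 1 (b c) = b c" if c: "c \<in> E" for c
  proof -
    define g where "g i = s i * \<sigma> i c" for i
    have "x * \<sigma> 1 (b c) = (\<Sum>i<p. x * \<sigma> 1 (s i) * \<sigma> (Suc i) c)"
      unfolding b_def using s_in_E sigma_in_E c
      by (simp add: sigma_sum sigma_mult sigma_sigma E_mult sum_distrib_left mult.assoc)
    also have "\<dots> = (\<Sum>i<p. g (Suc i))" unfolding g_def s_Suc ..
    also have "\<dots> = (\<Sum>i<p. g i)"
      using sum.lessThan_Suc_shift[of g p] s_0 s_p c by (simp add: g_def sigma_0 sigma_p)
    finally show ?thesis unfolding b_def g_def .
  qed
  have "b (\<alpha> ^ j) = \<alpha> ^ j * (\<Sum>i<p. s i * (\<zeta> ^ j) ^ i)" for j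
  proof -
    have "\<sigma> i (\<alpha> ^ j) = (\<zeta> ^ j) ^ i * \<alpha> ^ j" for i
      using sigma_power[OF alpha_in_E] sigma_alpha
      by (simp add: power_mult_distrib mult.commute flip: power_mult)
    thus ?thesis unfolding b_def by (simp add: sum_distrib_left mult_ac)
  qed
  then obtain j where y0: "b (\<alpha> ^ j) \<noteq> 0"
    using exists_zeta_power_sum_nonzero[of s, OF s_0] alpha_nonzero by auto
  define y where "y = b (\<alpha> ^ j)"
  have y: "y \<in> E" "y \<noteq> 0"
    unfolding y_def b_def using y0 s_in_E sigma_in_E alpha_in_E
    by (auto simp: b_def intro!: subfield_sum[OF subfield_E] E_mult subfield_power[OF subfield_E])
  have "x = y / \<sigma> 1 y"
    using b_fixed[OF subfield_power[OF subfield_E alpha_in_E]] sigma_nonzero[OF y]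
    unfolding y_def by (simp add: field_simps)
  also have "\<dots> = \<sigma> 1 (inverse y) / inverse y"
    using y by (simp add: sigma_inverse divide_inverse mult.commute)
  finally show ?thesis using y E_inverse by (intro bexI[of _ "inverse y"]) auto
qed

definition \<delta> :: "'a \<Rightarrow> 'a" where
  "\<delta> z = \<sigma> 1 z / z"

lemma delta_in_E: "z \<in> E \<Longrightarrow> z \<noteq> 0 \<Longrightarrow> \<delta> z \<in> E \<and> \<delta> z \<noteq> 0"
  unfolding \<delta>_def using sigma_in_E sigma_nonzero subfield_divide[OF subfield_E] by simp

lemma delta_alpha_power_F_mult:
  assumes "f \<in> F" "f \<noteq> 0" "w \<in> E" "w \<noteq> 0"
  shows "\<delta> (\<alpha> ^ k * f * w) = \<zeta> ^ k * \<delta> w"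
proof -
  have "\<sigma> 1 (\<alpha> ^ k * f * w) = (\<zeta> * \<alpha>) ^ k * f * \<sigma> 1 w"
    using assms F_subset_E alpha_in_E
    by (auto simp: sigma_mult sigma_power sigma_alpha sigma_F E_mult subfield_power[OF subfield_E])
  thus ?thesis unfolding \<delta>_def using assms alpha_nonzero by (simp add: power_mult_distrib)
qed

text \<open>Rigidity gives \<open>N x = a\<^sup>k y\<^sup>p = N (\<alpha>\<^sup>k y)\<close>; apply Hilbert 90 to \<open>x / (\<alpha>\<^sup>k y)\<close>.\<close>
lemma decompose_delta:
  assumes x: "x \<in> E" "x \<noteq> 0"
  shows "\<exists>k f z. f \<in> F \<and> f \<noteq> 0 \<and> z \<in> E \<and> z \<noteq> 0 \<and> x = \<alpha> ^ k * f * \<delta> z"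
proof -
  obtain k y where y: "y \<in> F" "y \<noteq> 0" and Nx: "N x = a ^ k * y ^ p"
    using N_rigid[OF x] by blast
  define w where "w = \<alpha> ^ k * y"
  have w: "w \<in> E" "w \<noteq> 0"
    unfolding w_def using y alpha_in_E alpha_nonzero F_subset_E by (auto intro: E_mult subfield_power[OF subfield_E])
  have "N w = a ^ k * y ^ p"
    unfolding w_def using y alpha_in_E F_subset_E
    by (auto simp: N_mult N_power N_alpha N_F subfield_power[OF subfield_E])
  moreover have "N x = N (x / w) * N w"
    using x w by (simp add: N_mult[symmetric] subfield_divide[OF subfield_E])
  ultimately have "N (x / w) = 1" using Nx a_nonzero y by simp
  moreover have "x / w \<in> E" "x / w \<noteq> 0" using x w subfield_divide[OF subfield_E] by auto
  ultimately obtain z where z: "z \<in> E" "z \<noteq> 0" "x / w = \<delta> z"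
    using hilbert90 unfolding \<delta>_def by blast
  hence "x = \<alpha> ^ k * y * \<delta> z" using w unfolding w_def by (simp add: field_simps)
  thus ?thesis using y z by blast
qed

lemma delta_iter_alpha_power_F_mult:
  assumes "f \<in> F" "f \<noteq> 0" "w \<in> E" "w \<noteq> 0"
  shows "\<exists>k' c. c \<in> F \<and> c \<noteq> 0 \<and> (\<delta> ^^ n) (\<alpha> ^ k * f * w) = \<alpha> ^ k' * c * (\<delta> ^^ n) w"
  using assms
proof (induction n arbitrary: k f w)
  case 0
  thus ?case by auto
next
  case (Suc n)
  have "\<zeta> ^ k \<in> F" "\<zeta> ^ k \<noteq> 0" using zeta_in_F zeta_nonzero by (auto intro: subfield_power[OF subfield])
  moreover have "\<delta> w \<in> E" "\<delta> w \<noteq> 0" using delta_in_E Suc.prems by auto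
  ultimately obtain k' c where "c \<in> F" "c \<noteq> 0"
      "(\<delta> ^^ n) (\<alpha> ^ 0 * \<zeta> ^ k * \<delta> w) = \<alpha> ^ k' * c * (\<delta> ^^ n) (\<delta> w)"
    using Suc.IH by blast
  moreover have "(\<delta> ^^ Suc n) (\<alpha> ^ k * f * w) = (\<delta> ^^ n) (\<alpha> ^ 0 * \<zeta> ^ k * \<delta> w)"
    using delta_alpha_power_F_mult[OF Suc.prems] by (simp add: funpow_Suc_right del: funpow.simps)
  ultimately show ?case by (auto simp: funpow_Suc_right simp del: funpow.simps)
qed

lemma decompose_delta_iter:
  assumes "x \<in> E" "x \<noteq> 0"
  shows "\<exists>k f z. f \<in> F \<and> f \<noteq> 0 \<and> z \<in> E \<and> z \<noteq> 0 \<and> x = \<alpha> ^ k * f * (\<delta> ^^ n) z"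
proof (induction n)
  case 0
  show ?case using assms subfield_one[OF subfield] by (intro exI[of _ 0] exI[of _ 1] exI[of _ x]) simp
next
  case (Suc n)
  then obtain k f z where f: "f \<in> F" "f \<noteq> 0" and z: "z \<in> E" "z \<noteq> 0"
      and x: "x = \<alpha> ^ k * f * (\<delta> ^^ n) z"
    by blast
  obtain k' f' z' where f': "f' \<in> F" "f' \<noteq> 0" and z': "z' \<in> E" "z' \<noteq> 0"
      and z_eq: "z = \<alpha> ^ k' * f' * \<delta> z'"
    using decompose_delta[OF z] by blast
  have "\<delta> z' \<in> E" "\<delta> z' \<noteq> 0" using delta_in_E[OF z'] by auto
  then obtain k'' c where c: "c \<in> F" "c \<noteq> 0" and
      "(\<delta> ^^ n) z = \<alpha> ^ k'' * c * (\<delta> ^^ n) (\<delta> z')"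
    using delta_iter_alpha_power_F_mult[OF f'] z_eq by blast
  hence "x = \<alpha> ^ (k + k'') * (f * c) * (\<delta> ^^ Suc n) z'"
    using x by (simp add: funpow_Suc_right power_add mult_ac del: funpow.simps)
  moreover have "f * c \<in> F" "f * c \<noteq> 0" using f c subfield_mult[OF subfield] by auto
  ultimately show ?case using z' by blast
qed

lemma delta_iter_eq_prod:
  assumes u: "u \<in> E" "u \<noteq> 0"
  shows "(\<delta> ^^ n) u = (\<Prod>j\<le>n. power_int (\<sigma> j u) (alt_binomial n j))"
proof (induction n)
  case 0
  thus ?case using sigma_0[OF u(1)] by (simp add: alt_binomial_def)
next
  case (Suc n)
  have conj: "\<sigma> j u \<in> E" "\<sigma> j u \<noteq> 0" for j using sigma_in_E sigma_nonzero u by auto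
  define P where "P = (\<Prod>j\<le>n. power_int (\<sigma> j u) (alt_binomial n j))"
  have "\<sigma> 1 P = (\<Prod>j\<le>n. power_int (\<sigma> (Suc j) u) (alt_binomial n j))"
    unfolding P_def using conj u
    by (simp add: sigma_prod sigma_power_int sigma_sigma subfield_power_int[OF subfield_E])
  moreover have "inverse P = power_int u (- alt_binomial n 0) *
      (\<Prod>j\<le>n. power_int (\<sigma> (Suc j) u) (- alt_binomial n (Suc j)))"
  proof -
    have "inverse P = (\<Prod>j\<le>n. power_int (\<sigma> j u) (- alt_binomial n j))"
      unfolding P_def by (simp add: power_int_minus prod_inversef[symmetric] comp_def)
    also have "\<dots> = (\<Prod>j\<le>Suc n. power_int (\<sigma> j u) (- alt_binomial n j))"
      by (simp add: alt_binomial_def binomial_eq_0)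
    finally show ?thesis by (simp only: prod.atMost_Suc_shift sigma_0[OF u(1)])
  qed
  moreover have "power_int (\<sigma> (Suc j) u) (alt_binomial n j) * power_int (\<sigma> (Suc j) u) (- alt_binomial n (Suc j))
      = power_int (\<sigma> (Suc j) u) (alt_binomial (Suc n) (Suc j))" for j
    using conj by (simp add: alt_binomial_Suc_Suc power_int_add[symmetric])
  ultimately have "\<sigma> 1 P * inverse P = power_int (\<sigma> 0 u) (alt_binomial (Suc n) 0) *
      (\<Prod>j\<le>n. power_int (\<sigma> (Suc j) u) (alt_binomial (Suc n) (Suc j)))"
    using sigma_0[OF u(1)] by (simp add: prod.distrib[symmetric] mult_ac alt_binomial_def)
  also have "\<dots> = (\<Prod>j\<le>Suc n. power_int (\<sigma> j u) (alt_binomial (Suc n) j))"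
    by (rule prod.atMost_Suc_shift[symmetric])
  finally show ?case using Suc by (simp add: P_def \<delta>_def divide_inverse)
qed

text \<open>The inner binomial coefficients are divisible by \<open>p\<close>, and the outer factors
  \<open>u\<^sup>-\<^sup>1\<close> (as \<open>p\<close> is odd) and \<open>\<sigma>\<^sup>p u = u\<close> cancel.\<close>
lemma delta_iter_p_is_pth_power:
  assumes u: "u \<in> E" "u \<noteq> 0"
  shows "\<exists>v\<in>E. v \<noteq> 0 \<and> (\<delta> ^^ p) u = v ^ p"
proof -
  have conj: "\<sigma> j u \<in> E" "\<sigma> j u \<noteq> 0" for j using sigma_in_E sigma_nonzero u by auto
  define t where "t j = alt_binomial p j div int p" for j
  define v where "v = (\<Prod>j\<in>{1..<p}. power_int (\<sigma> j u) (t j))"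
  have "{..p} = insert 0 (insert p {1..<p})" using p_ge_2 by auto
  hence "(\<delta> ^^ p) u = power_int (\<sigma> 0 u) (alt_binomial p 0) * (power_int (\<sigma> p u) (alt_binomial p p) *
      (\<Prod>j\<in>{1..<p}. power_int (\<sigma> j u) (alt_binomial p j)))"
    using p_ge_2 by (simp add: delta_iter_eq_prod[OF u] prod.insert)
  also have "power_int (\<sigma> 0 u) (alt_binomial p 0) = inverse u"
    using sigma_0[OF u(1)] odd by (simp add: alt_binomial_def power_int_minus)
  also have "power_int (\<sigma> p u) (alt_binomial p p) = u"
    using sigma_p[OF u(1)] by (simp add: alt_binomial_def)
  also have "(\<Prod>j\<in>{1..<p}. power_int (\<sigma> j u) (alt_binomial p j)) = v ^ p"
    unfolding v_def prod_power_distrib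
  proof (rule prod.cong)
    fix j assume "j \<in> {1..<p}"
    hence "alt_binomial p j = t j * int p" using prime_dvd_alt_binomial[OF prime] by (simp add: t_def)
    thus "power_int (\<sigma> j u) (alt_binomial p j) = power_int (\<sigma> j u) (t j) ^ p"
      by (simp add: power_int_mult)
  qed simp
  finally have "(\<delta> ^^ p) u = v ^ p" using u by simp
  moreover have "v \<in> E" "v \<noteq> 0"
    unfolding v_def using conj by (auto intro!: E_prod subfield_power_int[OF subfield_E])
  ultimately show ?thesis by blast
qed

lemma decompose_E:
  assumes "x \<in> E" "x \<noteq> 0"
  obtains k f v where "f \<in> F" "f \<noteq> 0" "v \<in> E" "v \<noteq> 0" "x = \<alpha> ^ k * f * v ^ p"
proof -
  obtain k f z where "f \<in> F" "f \<noteq> 0" "z \<in> E" "z \<noteq> 0" "x = \<alpha> ^ k * f * (\<delta> ^^ p) z"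
    using decompose_delta_iter[OF assms] by blast
  moreover obtain v where "v \<in> E" "v \<noteq> 0" "(\<delta> ^^ p) z = v ^ p"
    using delta_iter_p_is_pth_power \<open>z \<in> E\<close> \<open>z \<noteq> 0\<close> by blast
  ultimately show ?thesis using that by simp
qed

text \<open>Taking norms turns \<open>\<alpha>\<^sup>k = f y\<^sup>p\<close> into \<open>a\<^sup>k = (f N y)\<^sup>p\<close>; if \<open>p \<nmid> k\<close>, a Bezout
  combination \<open>k u = p v + 1\<close> would make \<open>a\<close> a \<open>p\<close>-th power.\<close>
lemma alpha_power_in_F_pclass_imp_dvd:
  assumes f: "f \<in> F" "f \<noteq> 0" and y: "y \<in> E" "y \<noteq> 0" and eq: "\<alpha> ^ k = f * y ^ p"
  shows "p dvd k"
proof (rule ccontr)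
  assume not_dvd: "\<not> p dvd k"
  define g where "g = f * N y"
  have g: "g \<in> F" "g \<noteq> 0"
    unfolding g_def using f N_in_F[OF y(1)] N_nonzero[OF y] subfield_mult[OF subfield] by auto
  have "a ^ k = N (\<alpha> ^ k)" using N_power[OF alpha_in_E] N_alpha by simp
  also have "\<dots> = g ^ p" unfolding eq g_def using f y F_subset_E
    by (auto simp: N_mult N_power N_F subfield_power[OF subfield_E] power_mult_distrib)
  finally have ak: "a ^ k = g ^ p" .
  have "k \<noteq> 0" using not_dvd by (metis dvd_0_right)
  moreover have "gcd k p = 1"
    using prime_imp_coprime[OF prime not_dvd] by (simp add: coprime_iff_gcd_eq_1 gcd.commute)
  ultimately obtain u v where uv: "k * u = p * v + 1" using bezout_nat[of k p] by auto
  have "a ^ (p * v) * a = a ^ (k * u)" unfolding uv by (simp add: power_add)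
  also have "\<dots> = g ^ (p * u)" by (simp only: power_mult ak)
  finally have "a = g ^ (p * u) / a ^ (p * v)" using a_nonzero by (simp add: field_simps)
  hence "a = (g ^ u / a ^ v) ^ p" by (simp add: power_mult mult.commute[of p] power_divide)
  moreover have "g ^ u / a ^ v \<in> F - {0}"
    using g a_in_F a_nonzero by (auto intro: subfield_divide[OF subfield] subfield_power[OF subfield])
  ultimately show False using a_not_pth_power by (auto simp: pth_powers_def)
qed

end

theorem lemma3p14:
  fixes F :: "'a::field set" and p :: nat and a \<alpha> :: 'a
  assumes "subfield_of F"
    and "prime p" and "odd p"
    and "has_primitive_root_of_unity F p"
    and "p_rigid F p"
    and "a \<in> F - {0}" and "a \<notin> pth_powers F p"
    and "\<alpha> ^ p = a"
  shows "(\<forall>x \<in> adjoin F \<alpha> - {0}. \<exists>k::nat. \<exists>f \<in> F - {0}.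
            pclass (adjoin F \<alpha>) p x = pclass (adjoin F \<alpha>) p (\<alpha> ^ k * f))
       \<and> (\<forall>k::nat. \<forall>f \<in> F - {0}.
            pclass (adjoin F \<alpha>) p (\<alpha> ^ k) = pclass (adjoin F \<alpha>) p f
            \<longrightarrow> pclass (adjoin F \<alpha>) p (\<alpha> ^ k) = pclass (adjoin F \<alpha>) p 1)"
proof -
  obtain \<zeta> where "\<zeta> \<in> F" "\<zeta> ^ p = 1" "\<And>k. 0 < k \<Longrightarrow> k < p \<Longrightarrow> \<zeta> ^ k \<noteq> 1"
    using assms(4) unfolding has_primitive_root_of_unity_def by blast
  moreover have "p_rigid_elt F p a" using assms(5-7) by (simp add: p_rigid_def)
  ultimately interpret rigid_kummer_radical F p a \<alpha> \<zeta>
    using assms by unfold_locales auto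
  have generated: "\<exists>k. \<exists>f \<in> F - {0}. pclass E p x = pclass E p (\<alpha> ^ k * f)"
    if x: "x \<in> E - {0}" for x
  proof -
    obtain k f v where "f \<in> F" "f \<noteq> 0" "v \<in> E" "v \<noteq> 0" "x = \<alpha> ^ k * f * v ^ p"
      using decompose_E[of x] x by blast
    thus ?thesis using pclass_mult_power[OF subfield_E] by auto
  qed
  have independent: "pclass E p (\<alpha> ^ k) = pclass E p 1"
    if f: "f \<in> F - {0}" and eq: "pclass E p (\<alpha> ^ k) = pclass E p f" for k f
  proof -
    obtain y where "y \<in> E - {0}" "\<alpha> ^ k = f * y ^ p"
      using eq pclass_self[OF subfield_E, of "\<alpha> ^ k" p] by (auto simp: pclass_def)
    then obtain m where "k = p * m" using alpha_power_in_F_pclass_imp_dvd f by blast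
    thus ?thesis using pclass_mult_power[OF subfield_E, of "\<alpha> ^ m" p 1] alpha_in_E alpha_nonzero
      by (simp add: power_mult mult.commute[of p] subfield_power[OF subfield_E])
  qed
  show ?thesis unfolding adjoin_eq_E using generated independent by blast
qed

end
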